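(* Let $p\in[1,\infty)$, let $X_1,X_2$ be Polish spaces, let $c:X_1\times X_2\to[0,\infty)$ be continuous, let $\mu_i\in\mathcal P_p(X_i)$, let $q>1$, and let $\varepsilon_k>0$ with $\varepsilon_k\to0$. Define $F_k,F:\mathcal P_p(X_1\times X_2)\to\mathbb R\cup\{\infty\}$ by $F_k(\pi)=\int c\,d\pi+\varepsilon_k D_q(\pi,\mu_1\otimes\mu_2)$ and $F(\pi)=\int c\,d\pi$ if $\pi\in\Pi(\mu_1,\mu_2)$, and $F_k(\pi)=F(\pi)=+\infty$ otherwise. Then for any sequence $(\pi_k)_{k\in\mathbb N}\subset\mathcal P_p(X_1\times X_2)$ with $\pi_k\to\pi$ narrowly, $$F(\pi)\le\liminf_{k\to\infty}F_k(\pi_k).$$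
   Context: $\mathcal P_p(X)$ is the set of probability measures with finite $p$-th moment and $\Pi(\mu_1,\mu_2)$ the set of couplings. The Tsallis relative entropy is $D_q(\mu,\nu)=\frac{1}{q-1}\int\big[(\frac{d\mu}{d\nu})^q-\frac{d\mu}{d\nu}\big]\,d\nu$ if $\mu\ll\nu$ and $q>1$, $+\infty$ otherwise. *)

theory Defs
  imports "HOL-Probability.Probability"
begin

definition Pp :: "real \<Rightarrow> 'a::metric_space measure set" where
  "Pp p = {M. prob_space M \<and> sets M = sets borel \<and>
      (\<exists>x0. (\<integral>\<^sup>+x. ennreal (dist x0 x powr p) \<partial>M) < \<infinity>)}"

definition couplings :: "'a::topological_space measure \<Rightarrow> 'b::topological_space measure \<Rightarrow> ('a \<times> 'b) measure set" where
  "couplings mu1 mu2 = {pm. prob_space pm \<and> sets pm = sets borel \<and>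
      distr pm mu1 fst = mu1 \<and> distr pm mu2 snd = mu2}"

definition ext_integral :: "'a measure \<Rightarrow> ('a \<Rightarrow> real) \<Rightarrow> ereal" where
  "ext_integral M g = enn2ereal (\<integral>\<^sup>+x. ennreal (g x) \<partial>M) - enn2ereal (\<integral>\<^sup>+x. ennreal (- g x) \<partial>M)"

definition tsallis :: "real \<Rightarrow> 'a measure \<Rightarrow> 'a measure \<Rightarrow> ereal" where
  "tsallis q mu nu =
    (if q > 1 \<and> absolutely_continuous nu mu then
       ereal (1 / (q - 1)) *
         ext_integral nu (\<lambda>x. (enn2real (RN_deriv nu mu x)) powr q - enn2real (RN_deriv nu mu x))
     else \<infinity>)"

definition narrow_conv :: "(nat \<Rightarrow> 'a::topological_space measure) \<Rightarrow> 'a measure \<Rightarrow> bool" where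
  "narrow_conv P Q \<longleftrightarrow> (\<forall>f :: 'a \<Rightarrow> real. continuous_on UNIV f \<and> bounded (range f) \<longrightarrow>
      (\<lambda>k. \<integral>x. f x \<partial>(P k)) \<longlonglongrightarrow> (\<integral>x. f x \<partial>Q))"

definition Fk :: "(('a \<times> 'b) \<Rightarrow> real) \<Rightarrow> real \<Rightarrow> real \<Rightarrow> 'a::topological_space measure \<Rightarrow> 'b::topological_space measure
    \<Rightarrow> ('a \<times> 'b) measure \<Rightarrow> ereal" where
  "Fk c q eps mu1 mu2 pm =
    (if pm \<in> couplings mu1 mu2
     then enn2ereal (\<integral>\<^sup>+z. ennreal (c z) \<partial>pm) + ereal eps * tsallis q pm (mu1 \<Otimes>\<^sub>M mu2)
     else \<infinity>)"

definition Fzero :: "(('a \<times> 'b) \<Rightarrow> real) \<Rightarrow> 'a::topological_space measure \<Rightarrow> 'b::topological_space measure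
    \<Rightarrow> ('a \<times> 'b) measure \<Rightarrow> ereal" where
  "Fzero c mu1 mu2 pm =
    (if pm \<in> couplings mu1 mu2 then enn2ereal (\<integral>\<^sup>+z. ennreal (c z) \<partial>pm) else \<infinity>)"

end

theory Submission
  imports Defs
begin

text \<open>Since \<open>D\<^sub>q \<ge> 0\<close> between probability measures (by convexity
  \<open>t\<^sup>q - t \<ge> (q - 1)(t - 1)\<close>, and the density integrates to 1), \<open>F \<le> F\<^sub>k\<close> pointwise,
  so it suffices that \<open>F\<close> is narrowly lower semicontinuous. On couplings, \<open>\<integral> c d\<pi>\<close> is the
  supremum over \<open>N\<close> of the narrowly continuous maps \<open>\<pi> \<mapsto> \<integral> min c N d\<pi>\<close>. Off the couplings
  it is enough that \<open>\<Pi>(\<mu>\<^sub>1, \<mu>\<^sub>2)\<close> is narrowly closed: the marginals of a narrow limit are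
  narrow limits of the marginals, and a finite Borel measure on a metric space is determined by
  its integrals of bounded continuous functions, which approximate indicators of closed sets.\<close>

lemma powr_minus_self_ge_tangent:
  fixes y q :: real
  assumes "y \<ge> 0" "q \<ge> 1"
  shows "(q - 1) * (y - 1) \<le> y powr q - y"
proof (cases "y = 0")
  case True
  with assms show ?thesis by simp
next
  case False
  with assms have "y > 0" by simp
  have "(q * 1 powr (q - 1)) * (y - 1) \<le> y powr q - 1 powr q"
    using powr_convex[OF assms(2)] \<open>y > 0\<close>
    by (intro convex_on_imp_above_tangent) (auto intro!: derivative_eq_intros simp: interior_open)
  then show ?thesis by (simp add: algebra_simps)
qed

lemma ext_integral_nonneg_above_balanced:
  assumes "\<And>x. g x \<le> h x"
    and "(\<integral>\<^sup>+x. ennreal (g x) \<partial>M) = (\<integral>\<^sup>+x. ennreal (- g x) \<partial>M)"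
  shows "0 \<le> ext_integral M h"
proof -
  have "(\<integral>\<^sup>+x. ennreal (- h x) \<partial>M) \<le> (\<integral>\<^sup>+x. ennreal (- g x) \<partial>M)"
    using assms(1) by (intro nn_integral_mono ennreal_leI) (simp add: le_minus_iff)
  also have "\<dots> \<le> (\<integral>\<^sup>+x. ennreal (h x) \<partial>M)"
    unfolding assms(2)[symmetric] using assms(1) by (intro nn_integral_mono ennreal_leI)
  finally show ?thesis
    unfolding ext_integral_def by (intro ereal_diff_positive) (simp add: less_eq_ennreal.rep_eq[symmetric])
qed

lemma (in prob_space) nn_integral_excess_eq_deficit:
  assumes [measurable]: "f \<in> borel_measurable M"
    and "\<And>x. f x \<ge> 0" "(\<integral>\<^sup>+x. ennreal (f x) \<partial>M) = 1"
  shows "(\<integral>\<^sup>+x. ennreal (f x - 1) \<partial>M) = (\<integral>\<^sup>+x. ennreal (1 - f x) \<partial>M)"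
proof -
  have excess_deficit_pointwise: "ennreal (t - 1) + 1 = ennreal (1 - t) + ennreal t" if "t \<ge> 0" for t :: real
  proof (cases "t \<ge> 1")
    case True
    then show ?thesis using ennreal_plus[of "t - 1" 1] by (simp add: ennreal_neg)
  next
    case False
    then show ?thesis using ennreal_plus[of "1 - t" t] that by (simp add: ennreal_neg)
  qed
  have "(\<integral>\<^sup>+x. ennreal (f x - 1) \<partial>M) + 1 = (\<integral>\<^sup>+x. ennreal (f x - 1) + 1 \<partial>M)"
    by (simp add: nn_integral_add emeasure_space_1)
  also have "\<dots> = (\<integral>\<^sup>+x. ennreal (1 - f x) + ennreal (f x) \<partial>M)"
    using assms(2) excess_deficit_pointwise by (intro nn_integral_cong) simp
  also have "\<dots> = (\<integral>\<^sup>+x. ennreal (1 - f x) \<partial>M) + 1"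
    using assms(3) by (simp add: nn_integral_add)
  finally show ?thesis
    by (simp add: ennreal_add_left_cancel add.commute[of _ 1])
qed

lemma nn_integral_real_RN_deriv_eq_1:
  assumes "prob_space mu" "prob_space nu" "sets mu = sets nu"
    and ac: "absolutely_continuous nu mu"
  shows "(\<integral>\<^sup>+x. ennreal (enn2real (RN_deriv nu mu x)) \<partial>nu) = 1"
proof -
  interpret mu: prob_space mu by fact
  interpret nu: prob_space nu by fact
  have "AE x in nu. RN_deriv nu mu x \<noteq> \<infinity>"
    using nu.RN_deriv_finite[OF mu.sigma_finite_measure ac assms(3)] .
  then have "(\<integral>\<^sup>+x. ennreal (enn2real (RN_deriv nu mu x)) \<partial>nu) = (\<integral>\<^sup>+x. RN_deriv nu mu x * 1 \<partial>nu)"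
    by (intro nn_integral_cong_AE) (auto simp: ennreal_enn2real_if)
  also have "\<dots> = (\<integral>\<^sup>+x. 1 \<partial>mu)"
    using nu.RN_deriv_nn_integral[OF ac assms(3), of "\<lambda>_. 1"] by simp
  finally show ?thesis
    by (simp add: mu.emeasure_space_1)
qed

lemma tsallis_nonneg:
  assumes "prob_space mu" "prob_space nu" "sets mu = sets nu"
  shows "0 \<le> tsallis q mu nu"
proof (cases "q > 1 \<and> absolutely_continuous nu mu")
  case False
  then show ?thesis by (auto simp: tsallis_def)
next
  case True
  then have q: "q > 1" and ac: "absolutely_continuous nu mu" by auto
  interpret nu: prob_space nu by fact
  define f where "f x = enn2real (RN_deriv nu mu x)" for x
  have [measurable]: "f \<in> borel_measurable nu" unfolding f_def by measurable
  have f_nonneg: "f x \<ge> 0" for x by (simp add: f_def)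
  have "(\<integral>\<^sup>+x. ennreal ((q - 1) * (f x - 1)) \<partial>nu) = (\<integral>\<^sup>+x. ennreal (- ((q - 1) * (f x - 1))) \<partial>nu)"
  proof -
    have "(\<integral>\<^sup>+x. ennreal (f x - 1) \<partial>nu) = (\<integral>\<^sup>+x. ennreal (1 - f x) \<partial>nu)"
      using f_nonneg nn_integral_real_RN_deriv_eq_1[OF assms ac]
      by (intro nu.nn_integral_excess_eq_deficit) (simp_all add: f_def)
    moreover have "ennreal ((q - 1) * (t - 1)) = ennreal (q - 1) * ennreal (t - 1)"
      and "ennreal (- ((q - 1) * (t - 1))) = ennreal (q - 1) * ennreal (1 - t)" for t
      using q by (simp_all add: ennreal_mult'[symmetric] minus_mult_right)
    ultimately show ?thesis
      by (simp add: nn_integral_cmult)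
  qed
  then have "0 \<le> ext_integral nu (\<lambda>x. f x powr q - f x)"
    using powr_minus_self_ge_tangent f_nonneg q
    by (intro ext_integral_nonneg_above_balanced) auto
  then show ?thesis
    using True q by (simp add: tsallis_def f_def)
qed

lemma borel_measurable_continuous_on_sets_eq:
  assumes "sets M = sets borel" "continuous_on UNIV f"
  shows "f \<in> borel_measurable M"
  using borel_measurable_continuous_onI[OF assms(2)] measurable_cong_sets[OF assms(1) refl] by blast

lemma (in finite_measure) nn_integral_eq_integral_bounded:
  assumes [measurable]: "f \<in> borel_measurable M"
    and "bounded (range f)" "\<And>x. 0 \<le> f x"
  shows "(\<integral>\<^sup>+x. ennreal (f x) \<partial>M) = ennreal (\<integral>x. f x \<partial>M)"
proof -
  obtain B where "\<And>x. norm (f x) \<le> B"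
    using assms(2) by (auto simp: bounded_iff)
  then have "integrable M f"
    by (intro integrable_const_bound[where B=B]) auto
  then show ?thesis
    using assms(3) by (intro nn_integral_eq_integral) auto
qed

lemma tendsto_infdist_cutoff_indicator:
  fixes F :: "'a::metric_space set"
  assumes "closed F" "F \<noteq> {}"
  shows "(\<lambda>n. max 0 (1 - real n * infdist x F)) \<longlonglongrightarrow> indicator F x"
proof (cases "x \<in> F")
  case True
  then show ?thesis by simp
next
  case False
  then have "infdist x F > 0"
    using in_closed_iff_infdist_zero[OF assms] infdist_nonneg[of x F] by auto
  then have "filterlim (\<lambda>n. real n * infdist x F) at_top sequentially"
    by (intro filterlim_at_top_mult_tendsto_pos[OF tendsto_const] filterlim_real_sequentially)
  then have "eventually (\<lambda>n. 1 \<le> real n * infdist x F) sequentially"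
    by (simp add: filterlim_at_top)
  then have "eventually (\<lambda>n. max 0 (1 - real n * infdist x F) = 0) sequentially"
    by eventually_elim simp
  then show ?thesis
    using False by (simp add: tendsto_eventually)
qed

lemma tendsto_integral_infdist_cutoff:
  fixes M :: "'a::metric_space measure"
  assumes "finite_measure M" "sets M = sets borel" "closed F" "F \<noteq> {}"
  shows "(\<lambda>n. \<integral>x. max 0 (1 - real n * infdist x F) \<partial>M) \<longlonglongrightarrow> measure M F"
proof -
  interpret finite_measure M by fact
  have [measurable]: "(\<lambda>x. max 0 (1 - real n * infdist x F)) \<in> borel_measurable M" for n
    using assms(2) by (intro borel_measurable_continuous_on_sets_eq continuous_intros)
  have "F \<in> sets M"
    using assms(2,3) by (simp add: borel_closed)
  have "(\<lambda>n. \<integral>x. max 0 (1 - real n * infdist x F) \<partial>M) \<longlonglongrightarrow> (\<integral>x. indicator F x \<partial>M)"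
    using \<open>F \<in> sets M\<close> tendsto_infdist_cutoff_indicator[OF assms(3,4)]
    by (intro integral_dominated_convergence[where w="\<lambda>_. 1"]) (auto simp: infdist_nonneg)
  then show ?thesis
    using \<open>F \<in> sets M\<close> by simp
qed

lemma measure_eqI_bounded_continuous:
  fixes M N :: "'a::metric_space measure"
  assumes "finite_measure M" "finite_measure N" "sets M = sets borel" "sets N = sets borel"
    and integral_eq: "\<And>f :: 'a \<Rightarrow> real. continuous_on UNIV f \<Longrightarrow> bounded (range f) \<Longrightarrow>
      (\<integral>x. f x \<partial>M) = (\<integral>x. f x \<partial>N)"
  shows "M = N"
proof (rule measure_eqI_generator_eq[where E="Collect closed" and \<Omega>=UNIV and A="\<lambda>_. UNIV"])
  interpret M: finite_measure M by fact
  interpret N: finite_measure N by fact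
  fix F :: "'a set"
  assume "F \<in> Collect closed"
  then have "closed F" by simp
  have "measure M F = measure N F"
  proof (cases "F = {}")
    case False
    have "bounded (range (\<lambda>x. max 0 (1 - real n * infdist x F)))" for n
      by (intro boundedI[where B=1]) (auto simp: infdist_nonneg)
    then have "(\<lambda>n. \<integral>x. max 0 (1 - real n * infdist x F) \<partial>M) = (\<lambda>n. \<integral>x. max 0 (1 - real n * infdist x F) \<partial>N)"
      by (intro ext integral_eq continuous_intros)
    then have "(\<lambda>n. \<integral>x. max 0 (1 - real n * infdist x F) \<partial>N) \<longlonglongrightarrow> measure M F"
      using tendsto_integral_infdist_cutoff[OF assms(1,3) \<open>closed F\<close> False] by simp
    then show ?thesis
      using tendsto_integral_infdist_cutoff[OF assms(2,4) \<open>closed F\<close> False] by (rule LIMSEQ_unique)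
  qed simp
  then show "emeasure M F = emeasure N F"
    by (simp add: M.emeasure_eq_measure N.emeasure_eq_measure)
next
  show "sets M = sigma_sets UNIV (Collect closed)" "sets N = sigma_sets UNIV (Collect closed)"
    using assms(3,4) by (simp_all add: borel_eq_closed)
  show "emeasure M UNIV \<noteq> \<infinity>"
    using assms(1) by (simp add: finite_measure.emeasure_finite)
qed (auto simp: Int_stable_def)

lemma narrow_conv_distr:
  fixes T :: "'a::topological_space \<Rightarrow> 'b::topological_space"
  assumes "narrow_conv P Q" "continuous_on UNIV T"
    and "\<And>k. sets (P k) = sets borel" "sets Q = sets borel"
  shows "narrow_conv (\<lambda>k. distr (P k) borel T) (distr Q borel T)"
  unfolding narrow_conv_def
proof (intro allI impI, elim conjE)
  fix f :: "'b \<Rightarrow> real"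
  assume f: "continuous_on UNIV f" "bounded (range f)"
  have T_meas: "T \<in> measurable M borel" if "sets M = sets borel" for M :: "'a measure"
    using that assms(2) by (rule borel_measurable_continuous_on_sets_eq)
  have [measurable]: "f \<in> borel_measurable borel"
    using f(1) by (rule borel_measurable_continuous_onI)
  have "continuous_on UNIV (f \<circ> T)"
    using continuous_on_compose[OF assms(2) continuous_on_subset[OF f(1)]] by simp
  moreover have "bounded (range (f \<circ> T))"
    using f(2) by (rule bounded_subset) auto
  ultimately have "(\<lambda>k. \<integral>x. f (T x) \<partial>P k) \<longlonglongrightarrow> (\<integral>x. f (T x) \<partial>Q)"
    using assms(1) by (simp add: narrow_conv_def comp_def)
  then show "(\<lambda>k. \<integral>x. f x \<partial>distr (P k) borel T) \<longlonglongrightarrow> (\<integral>x. f x \<partial>distr Q borel T)"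
    using assms(3,4) by (simp add: integral_distr T_meas)
qed

lemma narrow_conv_frequently_imp_eq:
  fixes M :: "'a::metric_space measure"
  assumes "narrow_conv P Q" "frequently (\<lambda>k. P k = M) sequentially"
    and "finite_measure Q" "finite_measure M" "sets Q = sets borel" "sets M = sets borel"
  shows "Q = M"
proof (rule measure_eqI_bounded_continuous[OF assms(3-6)])
  fix f :: "'a \<Rightarrow> real"
  assume "continuous_on UNIV f" "bounded (range f)"
  then have "(\<lambda>k. \<integral>x. f x \<partial>P k) \<longlonglongrightarrow> (\<integral>x. f x \<partial>Q)"
    using assms(1) by (simp add: narrow_conv_def)
  moreover have "frequently (\<lambda>k. (\<integral>x. f x \<partial>P k) = (\<integral>x. f x \<partial>M)) sequentially"
    using assms(2) by (rule frequently_elim1) simp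
  ultimately show "(\<integral>x. f x \<partial>Q) = (\<integral>x. f x \<partial>M)"
    using tendsto_imp_eventually_ne by (force simp: frequently_def)
qed

lemma narrow_limit_in_couplings:
  fixes mu1 :: "'a::metric_space measure" and mu2 :: "'b::metric_space measure"
  assumes "narrow_conv P Q" "frequently (\<lambda>k. P k \<in> couplings mu1 mu2) sequentially"
    and "\<And>k. sets (P k) = sets borel" "prob_space Q" "sets Q = sets borel"
    and "prob_space mu1" "sets mu1 = sets borel" "prob_space mu2" "sets mu2 = sets borel"
  shows "Q \<in> couplings mu1 mu2"
proof -
  have marginal: "distr Q mu T = mu"
    if "continuous_on UNIV T" "prob_space mu" "sets mu = sets borel"
      and "\<And>k. P k \<in> couplings mu1 mu2 \<Longrightarrow> distr (P k) mu T = mu"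
    for T :: "'a \<times> 'b \<Rightarrow> 'c::metric_space" and mu
  proof -
    have distr_borel: "distr M mu T = distr M borel T" for M :: "('a \<times> 'b) measure"
      using that(3) by (intro distr_cong) auto
    have "distr Q borel T = mu"
    proof (rule narrow_conv_frequently_imp_eq)
      show "narrow_conv (\<lambda>k. distr (P k) borel T) (distr Q borel T)"
        using assms(1) that(1) assms(3,5) by (rule narrow_conv_distr)
      show "frequently (\<lambda>k. distr (P k) borel T = mu) sequentially"
        using assms(2) by (rule frequently_elim1) (simp add: that(4) distr_borel[symmetric])
      show "finite_measure (distr Q borel T)"
        using assms(4,5) that(1)
        by (intro prob_space.finite_measure prob_space.prob_space_distr
            borel_measurable_continuous_on_sets_eq)
    qed (use that(2,3) prob_space.finite_measure in auto)
    then show ?thesis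
      by (simp add: distr_borel)
  qed
  have "distr Q mu1 fst = mu1" "distr Q mu2 snd = mu2"
    by (intro marginal continuous_intros; use assms(6-9) in \<open>simp add: couplings_def\<close>)+
  with assms(4,5) show ?thesis
    by (simp add: couplings_def)
qed

lemma integral_le_liminf_nn_integral_narrow_conv:
  assumes "narrow_conv P Q" "\<And>k. prob_space (P k)" "\<And>k. sets (P k) = sets borel"
    and "continuous_on UNIV g" "bounded (range g)" "\<And>x. 0 \<le> g x" "\<And>x. g x \<le> c x"
  shows "ereal (\<integral>x. g x \<partial>Q) \<le> liminf (\<lambda>k. enn2ereal (\<integral>\<^sup>+x. ennreal (c x) \<partial>P k))"
proof -
  have "(\<lambda>k. ereal (\<integral>x. g x \<partial>P k)) \<longlonglongrightarrow> ereal (\<integral>x. g x \<partial>Q)"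
    using assms(1,4,5) by (simp add: narrow_conv_def)
  then have "ereal (\<integral>x. g x \<partial>Q) = liminf (\<lambda>k. ereal (\<integral>x. g x \<partial>P k))"
    by (intro lim_imp_Liminf[symmetric]) simp_all
  also have "\<dots> \<le> liminf (\<lambda>k. enn2ereal (\<integral>\<^sup>+x. ennreal (c x) \<partial>P k))"
  proof (intro Liminf_mono always_eventually allI)
    fix k
    have "ennreal (\<integral>x. g x \<partial>P k) = (\<integral>\<^sup>+x. ennreal (g x) \<partial>P k)"
      using assms(2-6)
      by (intro prob_space.finite_measure finite_measure.nn_integral_eq_integral_bounded[symmetric]
          borel_measurable_continuous_on_sets_eq)
    also have "\<dots> \<le> (\<integral>\<^sup>+x. ennreal (c x) \<partial>P k)"
      using assms(7) by (intro nn_integral_mono ennreal_leI)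
    finally show "ereal (\<integral>x. g x \<partial>P k) \<le> enn2ereal (\<integral>\<^sup>+x. ennreal (c x) \<partial>P k)"
      using assms(6) by (simp add: less_eq_ennreal.rep_eq)
  qed
  finally show ?thesis .
qed

lemma nn_integral_le_liminf_narrow_conv:
  assumes "narrow_conv P Q" "\<And>k. prob_space (P k)" "\<And>k. sets (P k) = sets borel"
    and "prob_space Q" "sets Q = sets borel"
    and "continuous_on UNIV c" "\<And>x. 0 \<le> c x"
  shows "enn2ereal (\<integral>\<^sup>+x. ennreal (c x) \<partial>Q) \<le> liminf (\<lambda>k. enn2ereal (\<integral>\<^sup>+x. ennreal (c x) \<partial>P k))"
proof -
  define c_trunc where "c_trunc N x = min (c x) (real N)" for N x
  have cont: "continuous_on UNIV (c_trunc N)" for N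
    unfolding c_trunc_def using assms(6) by (intro continuous_intros)
  have bdd: "bounded (range (c_trunc N))" for N
    unfolding c_trunc_def using assms(7) by (intro boundedI[where B="real N"]) auto
  have nonneg: "0 \<le> c_trunc N x" for N x
    unfolding c_trunc_def using assms(7) by simp
  have [measurable]: "c_trunc N \<in> borel_measurable Q" for N
    using assms(5) cont by (rule borel_measurable_continuous_on_sets_eq)
  have "(\<lambda>N. \<integral>\<^sup>+x. ennreal (c_trunc N x) \<partial>Q) \<longlonglongrightarrow> (\<integral>\<^sup>+x. ennreal (c x) \<partial>Q)"
  proof (rule nn_integral_LIMSEQ)
    show "incseq (\<lambda>N x. ennreal (c_trunc N x))"
      by (auto simp: incseq_def le_fun_def c_trunc_def intro!: ennreal_leI)
    fix x
    have "eventually (\<lambda>N. c x \<le> real N) sequentially"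
      using filterlim_real_sequentially by (simp add: filterlim_at_top)
    then have "eventually (\<lambda>N. c_trunc N x = c x) sequentially"
      by eventually_elim (simp add: c_trunc_def)
    then show "(\<lambda>N. ennreal (c_trunc N x)) \<longlonglongrightarrow> ennreal (c x)"
      by (intro tendsto_ennrealI tendsto_eventually)
  qed simp
  moreover have "(\<integral>\<^sup>+x. ennreal (c_trunc N x) \<partial>Q) = ennreal (\<integral>x. c_trunc N x \<partial>Q)" for N
    using assms(4) bdd nonneg
    by (intro prob_space.finite_measure finite_measure.nn_integral_eq_integral_bounded) auto
  moreover have "enn2ereal (ennreal (\<integral>x. c_trunc N x \<partial>Q)) = ereal (\<integral>x. c_trunc N x \<partial>Q)" for N
    using nonneg by (simp add: integral_nonneg)
  ultimately have lim: "(\<lambda>N. ereal (\<integral>x. c_trunc N x \<partial>Q)) \<longlonglongrightarrow> enn2ereal (\<integral>\<^sup>+x. ennreal (c x) \<partial>Q)"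
    by (simp only: tendsto_enn2ereal_iff[symmetric])
  have bound: "ereal (\<integral>x. c_trunc N x \<partial>Q) \<le> liminf (\<lambda>k. enn2ereal (\<integral>\<^sup>+x. ennreal (c x) \<partial>P k))" for N
    using assms(1-3) cont bdd nonneg
    by (rule integral_le_liminf_nn_integral_narrow_conv) (simp add: c_trunc_def)
  show ?thesis
    using lim by (rule tendsto_upperbound) (simp_all add: bound)
qed

lemma Fzero_le_Fk:
  fixes mu1 :: "'a::second_countable_topology measure" and mu2 :: "'b::second_countable_topology measure"
  assumes "0 \<le> eps" "prob_space mu1" "sets mu1 = sets borel" "prob_space mu2" "sets mu2 = sets borel"
  shows "Fzero c mu1 mu2 pm \<le> Fk c q eps mu1 mu2 pm"
proof (cases "pm \<in> couplings mu1 mu2")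
  case True
  have "sets (mu1 \<Otimes>\<^sub>M mu2) = sets (borel :: ('a \<times> 'b) measure)"
    using sets_pair_measure_cong[OF assms(3,5)] by (simp only: borel_prod)
  then have "0 \<le> tsallis q pm (mu1 \<Otimes>\<^sub>M mu2)"
    using True assms(2,4) by (intro tsallis_nonneg prob_space_pair) (simp_all add: couplings_def)
  then have "0 \<le> ereal eps * tsallis q pm (mu1 \<Otimes>\<^sub>M mu2)"
    using assms(1) by simp
  then show ?thesis
    using True by (simp add: Fzero_def Fk_def add_increasing2)
qed (simp add: Fzero_def Fk_def)

lemma Fzero_le_liminf_narrow_conv:
  fixes mu1 :: "'a::metric_space measure" and mu2 :: "'b::metric_space measure"
  assumes "narrow_conv P Q" "\<And>k. prob_space (P k)" "\<And>k. sets (P k) = sets borel"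
    and "prob_space Q" "sets Q = sets borel"
    and "prob_space mu1" "sets mu1 = sets borel" "prob_space mu2" "sets mu2 = sets borel"
    and "continuous_on UNIV c" "\<And>z. 0 \<le> c z"
  shows "Fzero c mu1 mu2 Q \<le> liminf (\<lambda>k. Fzero c mu1 mu2 (P k))"
proof (cases "Q \<in> couplings mu1 mu2")
  case True
  have "Fzero c mu1 mu2 Q = enn2ereal (\<integral>\<^sup>+z. ennreal (c z) \<partial>Q)"
    using True by (simp add: Fzero_def)
  also have "\<dots> \<le> liminf (\<lambda>k. enn2ereal (\<integral>\<^sup>+z. ennreal (c z) \<partial>P k))"
    using assms(1-5,10,11) by (rule nn_integral_le_liminf_narrow_conv)
  also have "\<dots> \<le> liminf (\<lambda>k. Fzero c mu1 mu2 (P k))"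
    by (intro Liminf_mono always_eventually allI) (simp add: Fzero_def)
  finally show ?thesis .
next
  case False
  then have "\<not> frequently (\<lambda>k. P k \<in> couplings mu1 mu2) sequentially"
    using narrow_limit_in_couplings assms(1-9) by blast
  then have "eventually (\<lambda>k. Fzero c mu1 mu2 (P k) = \<infinity>) sequentially"
    unfolding not_frequently by eventually_elim (simp add: Fzero_def)
  then have "liminf (\<lambda>k. Fzero c mu1 mu2 (P k)) = \<infinity>"
    by (intro lim_imp_Liminf tendsto_eventually) simp_all
  then show ?thesis
    by simp
qed

theorem proposition3p1:
  fixes p q :: real
    and c :: "('a::polish_space \<times> 'b::polish_space) \<Rightarrow> real"
    and mu1 :: "'a measure" and mu2 :: "'b measure"
    and eps :: "nat \<Rightarrow> real"
    and pms :: "nat \<Rightarrow> ('a \<times> 'b) measure" and pm :: "('a \<times> 'b) measure"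
  assumes "p \<ge> 1"
    and "continuous_on UNIV c" and "\<And>z. c z \<ge> 0"
    and "mu1 \<in> Pp p" and "mu2 \<in> Pp p"
    and "q > 1"
    and "\<And>k. eps k > 0" and "eps \<longlonglongrightarrow> 0"
    and "\<And>k. pms k \<in> Pp p" and "pm \<in> Pp p"
    and "narrow_conv pms pm"
  shows "Fzero c mu1 mu2 pm \<le> liminf (\<lambda>k. Fk c q (eps k) mu1 mu2 (pms k))"
proof -
  have mu1: "prob_space mu1" "sets mu1 = sets borel"
    and mu2: "prob_space mu2" "sets mu2 = sets borel"
    and pm: "prob_space pm" "sets pm = sets borel"
    and pms: "\<And>k. prob_space (pms k)" "\<And>k. sets (pms k) = sets borel"
    using assms(4,5,9,10) by (auto simp: Pp_def)
  have "Fzero c mu1 mu2 pm \<le> liminf (\<lambda>k. Fzero c mu1 mu2 (pms k))"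
    using assms(11) pms pm mu1 mu2 assms(2,3) by (rule Fzero_le_liminf_narrow_conv)
  also have "\<dots> \<le> liminf (\<lambda>k. Fk c q (eps k) mu1 mu2 (pms k))"
    using mu1 mu2 assms(7)[THEN less_imp_le]
    by (intro Liminf_mono always_eventually allI Fzero_le_Fk)
  finally show ?thesis .
qed

end
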